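(* Assume condition (S). Let $\Phi_n=(\phi_n,(\phi_n)'_1)$, $n\ge1$, be normalized eigenelements of $K$ as in the expansion theorem, with each $\phi_n$ real-valued. Then $$\sum_{n=1}^{\infty}\big[(\phi_n)'_1\big]^2=\frac{\rho}{p(1)}\qquad\text{and}\qquad\sum_{n=1}^{\infty}(\phi_n)'_1\,\phi_n(x)=0,$$ the second series converging to $0$ in $L_2([-1,1],r)$.
   Context: Fix $-1<h_1<h_2<1$ and put $\Omega:=[-1,h_1)\cup(h_1,h_2)\cup(h_2,1]$. Let $r,p,q$ be real-valued functions such that $r,p,p',q$ are continuous on each of $[-1,h_1)$, $(h_1,h_2)$, $(h_2,1]$ and have finite one-sided limits at $h_1$ and $h_2$ (denoted $f(h\pm 0)$), with $r(x)>0$, $p(x)>0$ on $\Omega$. Let $\alpha_1,\alpha_2,\beta_1,\beta_2,\gamma_j,\delta_j$ ($j=1,\dots,4$) be real numbers with $|\beta_1|+|\beta_2|\neq0$, all $\gamma_j\neq0$, $\delta_j\neq0$, and $\rho:=\alpha_1\beta_2-\alpha_2\beta_1>0$. Condition (S): $\delta_1\delta_2\,p(h_1-0)=\gamma_1\gamma_2\,p(h_1+0)$ and $\delta_3\delta_4\,p(h_2-0)=\gamma_3\gamma_4\,p(h_2+0)$. Put $\ell u:=\frac{1}{r(x)}\{-(p(x)u')'+q(x)u\}$, and for a function $u$ set $(u)_1:=\beta_1u(1)-\beta_2u'(1)$, $(u)'_1:=\alpha_1u(1)-\alpha_2u'(1)$. Let $H=L_2[-1,1]\oplus\mathbb{C}$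 with inner product $\langle T,G\rangle:=\int_{-1}^{1}T_1\overline{G_1}r\,dx+\frac{p(1)}{\rho}T_2\overline{G_2}$. The operator $K$ has domain $D(K)$ of those $T=(T_1,T_2)\in H$ with $T_1,T_1'$ absolutely continuous on each of the three subintervals, finite limits $T_1(h_i\pm0),T_1'(h_i\pm0)$, $\ell T_1\in L_2[-1,1]$, $T_1(-1)=0$, $\gamma_1T_1(h_1-0)=\delta_1T_1(h_1+0)$, $\gamma_2T_1'(h_1-0)=\delta_2T_1'(h_1+0)$, $\gamma_3T_1(h_2-0)=\delta_3T_1(h_2+0)$, $\gamma_4T_1'(h_2-0)=\delta_4T_1'(h_2+0)$, and $T_2=(T_1)'_1$; $KT:=(\ell T_1,-(T_1)_1)$. Under (S), $K$ has real eigenvalues $\lambda_1\le\lambda_2\le\cdots$ (with multiplicity) and eigenelements $\Phi_n=(\phi_n,(\phi_n)'_1)$, $\|\Phi_n\|_H=1$, such that $T=\sum_n\langle T,\Phi_n\rangle\Phi_n$ in $H$ for every $T\in H$. *)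

theory Defs
  imports "HOL-Analysis.Analysis"
begin

definition piece :: "real \<Rightarrow> real \<Rightarrow> real \<Rightarrow> real set" where
  "piece h1 h2 x = (if x < h1 then {-1..<h1} else if x < h2 then {h1<..<h2} else {h2<..1})"

definition Omega :: "real \<Rightarrow> real \<Rightarrow> real set" where
  "Omega h1 h2 = {-1..<h1} \<union> {h1<..<h2} \<union> {h2<..1}"

definition lft :: "(real \<Rightarrow> 'a::t2_space) \<Rightarrow> real \<Rightarrow> 'a" where
  "lft f h = Lim (at_left h) f"

definition rgt :: "(real \<Rightarrow> 'a::t2_space) \<Rightarrow> real \<Rightarrow> 'a" where
  "rgt f h = Lim (at_right h) f"

definition has_one_sided_limits :: "real \<Rightarrow> real \<Rightarrow> (real \<Rightarrow> 'a::topological_space) \<Rightarrow> bool" where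
  "has_one_sided_limits h1 h2 f \<longleftrightarrow>
     (\<exists>L. (f \<longlongrightarrow> L) (at_left h1)) \<and> (\<exists>L. (f \<longlongrightarrow> L) (at_right h1)) \<and>
     (\<exists>L. (f \<longlongrightarrow> L) (at_left h2)) \<and> (\<exists>L. (f \<longlongrightarrow> L) (at_right h2))"

definition pw_cont :: "real \<Rightarrow> real \<Rightarrow> (real \<Rightarrow> real) \<Rightarrow> bool" where
  "pw_cont h1 h2 f \<longleftrightarrow>
     continuous_on {-1..<h1} f \<and> continuous_on {h1<..<h2} f \<and> continuous_on {h2<..1} f \<and>
     has_one_sided_limits h1 h2 f"

definition abs_cont_on :: "real set \<Rightarrow> (real \<Rightarrow> 'a::real_normed_vector) \<Rightarrow> bool" where
  "abs_cont_on S f \<longleftrightarrow>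
     (\<forall>e>0. \<exists>d>0. \<forall>(n::nat) (a::nat \<Rightarrow> real) b.
        (\<forall>i<n. a i \<le> b i \<and> {a i..b i} \<subseteq> S) \<and>
        (\<forall>i<n. \<forall>j<n. i \<noteq> j \<longrightarrow> b i \<le> a j \<or> b j \<le> a i) \<and>
        (\<Sum>i<n. b i - a i) < d
        \<longrightarrow> (\<Sum>i<n. norm (f (b i) - f (a i))) < e)"

definition pw_abs_cont :: "real \<Rightarrow> real \<Rightarrow> (real \<Rightarrow> 'a::real_normed_vector) \<Rightarrow> bool" where
  "pw_abs_cont h1 h2 f \<longleftrightarrow>
     abs_cont_on {-1..<h1} f \<and> abs_cont_on {h1<..<h2} f \<and> abs_cont_on {h2<..1} f"

definition dv :: "real \<Rightarrow> real \<Rightarrow> (real \<Rightarrow> complex) \<Rightarrow> real \<Rightarrow> complex" where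
  "dv h1 h2 u x = vector_derivative u (at x within piece h1 h2 x)"

definition bc :: "real \<Rightarrow> real \<Rightarrow> real \<Rightarrow> real \<Rightarrow> (real \<Rightarrow> complex) \<Rightarrow> complex" where
  "bc h1 h2 b1 b2 u = of_real b1 * u 1 - of_real b2 * dv h1 h2 u 1"

definition bc' :: "real \<Rightarrow> real \<Rightarrow> real \<Rightarrow> real \<Rightarrow> (real \<Rightarrow> complex) \<Rightarrow> complex" where
  "bc' h1 h2 a1 a2 u = of_real a1 * u 1 - of_real a2 * dv h1 h2 u 1"

definition inL2 :: "(real \<Rightarrow> real) \<Rightarrow> (real \<Rightarrow> complex) \<Rightarrow> bool" where
  "inL2 r u \<longleftrightarrow> set_borel_measurable lebesgue {-1..1} u \<and>
     set_integrable lebesgue {-1..1} (\<lambda>x. r x * (cmod (u x))\<^sup>2)"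

definition l2norm :: "(real \<Rightarrow> real) \<Rightarrow> (real \<Rightarrow> complex) \<Rightarrow> real" where
  "l2norm r u = sqrt (LINT x:{-1..1}|lebesgue. r x * (cmod (u x))\<^sup>2)"

definition inH :: "(real \<Rightarrow> real) \<Rightarrow> (real \<Rightarrow> complex) \<times> complex \<Rightarrow> bool" where
  "inH r T \<longleftrightarrow> inL2 r (fst T)"

definition hinner :: "(real \<Rightarrow> real) \<Rightarrow> (real \<Rightarrow> real) \<Rightarrow> real \<Rightarrow>
    (real \<Rightarrow> complex) \<times> complex \<Rightarrow> (real \<Rightarrow> complex) \<times> complex \<Rightarrow> complex" where
  "hinner r p rho T G =
     (LINT x:{-1..1}|lebesgue. fst T x * cnj (fst G x) * of_real (r x))
     + of_real (p 1 / rho) * snd T * cnj (snd G)"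

definition hnorm :: "(real \<Rightarrow> real) \<Rightarrow> (real \<Rightarrow> real) \<Rightarrow> real \<Rightarrow>
    (real \<Rightarrow> complex) \<times> complex \<Rightarrow> real" where
  "hnorm r p rho T = sqrt (Re (hinner r p rho T T))"

text \<open>"l u = v" (a.e. on [-1,1]), where l u = (1/r)(-(p u')' + q u).\<close>

definition ell_eq :: "real \<Rightarrow> real \<Rightarrow> (real \<Rightarrow> real) \<Rightarrow> (real \<Rightarrow> real) \<Rightarrow> (real \<Rightarrow> real) \<Rightarrow>
    (real \<Rightarrow> complex) \<Rightarrow> (real \<Rightarrow> complex) \<Rightarrow> bool" where
  "ell_eq h1 h2 r p q u v \<longleftrightarrow>
     (AE x in lebesgue. x \<in> {-1..1} \<longrightarrow>
        ((\<lambda>y. of_real (p y) * dv h1 h2 u y) has_vector_derivative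
           (of_real (q x) * u x - of_real (r x) * v x)) (at x))"

definition inDomK :: "real \<Rightarrow> real \<Rightarrow> (real \<Rightarrow> real) \<Rightarrow> (real \<Rightarrow> real) \<Rightarrow> (real \<Rightarrow> real) \<Rightarrow>
    real \<Rightarrow> real \<Rightarrow> (nat \<Rightarrow> real) \<Rightarrow> (nat \<Rightarrow> real) \<Rightarrow> (real \<Rightarrow> complex) \<times> complex \<Rightarrow> bool" where
  "inDomK h1 h2 r p q a1 a2 \<gamma> \<delta> T \<longleftrightarrow>
     (let T1 = fst T; T1' = dv h1 h2 T1 in
       inH r T \<and>
       (\<exists>D. (\<forall>x\<in>Omega h1 h2. (T1 has_vector_derivative D x) (at x within piece h1 h2 x)) \<and>
            pw_abs_cont h1 h2 T1 \<and> pw_abs_cont h1 h2 D) \<and>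
       has_one_sided_limits h1 h2 T1 \<and> has_one_sided_limits h1 h2 T1' \<and>
       (\<exists>v. inL2 r v \<and> ell_eq h1 h2 r p q T1 v) \<and>
       T1 (-1) = 0 \<and>
       of_real (\<gamma> 1) * lft T1 h1 = of_real (\<delta> 1) * rgt T1 h1 \<and>
       of_real (\<gamma> 2) * lft T1' h1 = of_real (\<delta> 2) * rgt T1' h1 \<and>
       of_real (\<gamma> 3) * lft T1 h2 = of_real (\<delta> 3) * rgt T1 h2 \<and>
       of_real (\<gamma> 4) * lft T1' h2 = of_real (\<delta> 4) * rgt T1' h2 \<and>
       snd T = bc' h1 h2 a1 a2 T1)"

end

theory Submission
  imports Defs
begin

(* Proof idea (the paper's): expand the element T0 = (0, 1) of H in the eigenbasis.
   Because each phi_n is real-valued, so is its boundary value c_n = (phi_n)'_1, and the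
   Fourier coefficient of T0 is <T0, Phi_n> = k c_n with k = p(1)/rho > 0.  Hence the
   N-th residual of the expansion is the pair (-k u_N, 1 - k s_N), where
   u_N = sum_{n<N} c_n phi_n and s_N = sum_{n<N} c_n^2.  The squared H-norm of a pair
   (v, g) is ||v||^2 + k |g|^2 with both summands nonnegative (r > 0 a.e.), so the
   residual tending to 0 forces ||u_N|| -> 0 and s_N -> 1/k = rho/p(1). *)

text \<open>A derivative of a real-valued function (at a non-isolated point) is real,
  since the conjugate function has the conjugate derivative.\<close>

lemma vector_derivative_of_real_valued:
  fixes f :: "real \<Rightarrow> complex"
  assumes real: "\<forall>y\<in>S. f y \<in> \<real>" and x: "x \<in> S" and nontriv: "at x within S \<noteq> bot"
    and deriv: "(f has_vector_derivative D) (at x within S)"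
  shows "vector_derivative f (at x within S) = D" and "cnj D = D"
proof -
  have conj_deriv: "((\<lambda>y. cnj (f y)) has_vector_derivative cnj D) (at x within S)"
    using deriv by (rule has_vector_derivative_cnj)
  have "(f has_vector_derivative cnj D) (at x within S)"
  proof (rule has_vector_derivative_transform_within[OF conj_deriv, of 1])
    show "cnj (f y) = f y" if "y \<in> S" for y
      using real that Reals_cnj_iff by blast
  qed (use x in auto)
  then show "cnj D = D"
    by (rule vector_derivative_unique_within[OF nontriv deriv, symmetric])
  show "vector_derivative f (at x within S) = D"
    by (rule vector_derivative_within[OF nontriv deriv])
qed

lemma bc'_real:
  assumes h: "h1 < h2" "h2 < 1"
    and dom: "inDomK h1 h2 r p q a1 a2 \<gamma> \<delta> (u, g)"
    and real: "\<forall>x\<in>{h2<..1}. u x \<in> \<real>"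
  shows "cnj (bc' h1 h2 a1 a2 u) = bc' h1 h2 a1 a2 u"
proof -
  have piece1: "piece h1 h2 1 = {h2<..1}" and om1: "1 \<in> Omega h1 h2"
    using h by (simp_all add: piece_def Omega_def)
  from dom obtain D where "\<forall>x\<in>Omega h1 h2. (u has_vector_derivative D x) (at x within piece h1 h2 x)"
    unfolding inDomK_def Let_def by auto
  then have deriv: "(u has_vector_derivative D 1) (at 1 within {h2<..1})"
    using om1 piece1 by auto
  have nontriv: "at 1 within {h2<..1} \<noteq> bot"
    using h by (simp add: trivial_limit_within)
  have "1 \<in> {h2<..1}" using h by simp
  note D1 = vector_derivative_of_real_valued[OF real this nontriv deriv]
  have "dv h1 h2 u 1 = D 1" using D1(1) piece1 by (simp add: dv_def)
  moreover have "u 1 \<in> \<real>" using real h by auto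
  ultimately show ?thesis using D1(2) by (simp add: bc'_def Reals_cnj_iff)
qed

lemma set_integral_times_cnj:
  fixes v :: "real \<Rightarrow> complex"
  shows "(LINT x:S|M. v x * cnj (v x) * of_real (r x))
       = of_real (LINT x:S|M. r x * (cmod (v x))\<^sup>2)"
proof -
  have "v x * cnj (v x) * of_real (r x) = of_real (r x * (cmod (v x))\<^sup>2)" for x
    by (metis complex_norm_square of_real_power of_real_mult mult.commute)
  then show ?thesis by (simp only: set_integral_complex_of_real)
qed

text \<open>Since the weight is positive off the two jump points, the squared weighted
  \<open>L\<^sub>2\<close>-norm is a nonnegative integral.\<close>

lemma weighted_square_integral_nonneg:
  assumes pos: "\<forall>x\<in>Omega h1 h2. r x > 0"
  shows "0 \<le> (LINT x:{-1..1}|lebesgue. r x * (cmod (v x))\<^sup>2)"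
  unfolding set_lebesgue_integral_def
proof (rule integral_nonneg_AE, rule eventually_mono[OF AE_not_in[of "{h1, h2}"]])
  fix x :: real assume "x \<notin> {h1, h2}"
  then have "x \<in> {-1..1} \<Longrightarrow> r x > 0" using pos by (auto simp: Omega_def)
  then show "0 \<le> indicator {-1..1} x *\<^sub>R (r x * (cmod (v x))\<^sup>2)"
    by (cases "x \<in> {-1..1}") auto
qed simp

lemma hnorm_pair:
  assumes pos: "\<forall>x\<in>Omega h1 h2. r x > 0"
  shows "hnorm r p rho (v, g) = sqrt ((l2norm r v)\<^sup>2 + p 1 / rho * (cmod g)\<^sup>2)"
proof -
  have "g * cnj g = of_real ((cmod g)\<^sup>2)"
    by (metis complex_norm_square of_real_power)
  then have "Re (of_real (p 1 / rho) * g * cnj g) = p 1 / rho * (cmod g)\<^sup>2"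
    by (simp only: mult.assoc Re_complex_of_real flip: of_real_mult)
  moreover have "(l2norm r v)\<^sup>2 = (LINT x:{-1..1}|lebesgue. r x * (cmod (v x))\<^sup>2)"
    using weighted_square_integral_nonneg[OF pos] by (simp add: l2norm_def)
  ultimately show ?thesis
    by (simp add: hnorm_def hinner_def set_integral_times_cnj)
qed

lemma hnorm_tendsto_zero_components:
  assumes pos: "\<forall>x\<in>Omega h1 h2. r x > 0" and k: "p 1 / rho > 0"
    and lim: "(\<lambda>N. hnorm r p rho (v N, g N)) \<longlonglongrightarrow> 0"
  shows "(\<lambda>N. l2norm r (v N)) \<longlonglongrightarrow> 0" and "g \<longlonglongrightarrow> 0"
proof -
  define k where "k = p 1 / rho"
  have k_pos: "k > 0" using k by (simp add: k_def)
  have norm_eq: "hnorm r p rho (v N, g N) = sqrt ((l2norm r (v N))\<^sup>2 + k * (cmod (g N))\<^sup>2)" for N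
    using hnorm_pair[OF pos] by (simp add: k_def)
  have "norm (l2norm r (v N)) \<le> hnorm r p rho (v N, g N)" for N
  proof -
    have "norm (l2norm r (v N)) = sqrt ((l2norm r (v N))\<^sup>2)" by simp
    also have "\<dots> \<le> hnorm r p rho (v N, g N)"
      unfolding norm_eq using k_pos by (intro real_sqrt_le_mono) simp
    finally show ?thesis .
  qed
  then show "(\<lambda>N. l2norm r (v N)) \<longlonglongrightarrow> 0"
    by (intro Lim_null_comparison[OF always_eventually lim]) auto
  have "norm (g N) \<le> hnorm r p rho (v N, g N) / sqrt k" for N
  proof -
    have "norm (g N) * sqrt k = sqrt (k * (cmod (g N))\<^sup>2)"
      using k_pos by (simp add: real_sqrt_mult mult.commute)
    also have "\<dots> \<le> hnorm r p rho (v N, g N)"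
      unfolding norm_eq by (intro real_sqrt_le_mono) simp
    finally show ?thesis using k_pos by (simp add: pos_le_divide_eq)
  qed
  then show "g \<longlonglongrightarrow> 0"
    by (intro Lim_null_comparison[OF always_eventually tendsto_divide_zero[OF lim]]) auto
qed

lemma l2norm_scale:
  "l2norm r (\<lambda>x. a * v x) = cmod a * l2norm r v"
proof -
  have "r x * (cmod (a * v x))\<^sup>2 = (cmod a)\<^sup>2 * (r x * (cmod (v x))\<^sup>2)" for x
    by (simp add: norm_mult power_mult_distrib)
  then have "(LINT x:{-1..1}|lebesgue. r x * (cmod (a * v x))\<^sup>2)
      = (cmod a)\<^sup>2 * (LINT x:{-1..1}|lebesgue. r x * (cmod (v x))\<^sup>2)"
    by (simp only: set_integral_mult_right)
  then show ?thesis
    by (simp add: l2norm_def real_sqrt_mult)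
qed

lemma residual_of_unit:
  fixes p :: "real \<Rightarrow> real" and rho :: real
  assumes real: "\<forall>n. cnj (c n) = c n"
  defines "k \<equiv> complex_of_real (p 1 / rho)"
  shows "(\<lambda>x. 0 - (\<Sum>n<N. hinner r p rho (\<lambda>x. 0, 1) (\<phi> n, c n) * \<phi> n x),
          1 - (\<Sum>n<N. hinner r p rho (\<lambda>x. 0, 1) (\<phi> n, c n) * c n))
       = (\<lambda>x. - k * (\<Sum>n<N. c n * \<phi> n x), 1 - k * (\<Sum>n<N. (c n)\<^sup>2))"
proof -
  have "hinner r p rho (\<lambda>x. 0, 1) (\<phi> n, c n) = k * c n" for n
    using real by (simp add: hinner_def k_def)
  then show ?thesis
    by (simp add: sum_distrib_left sum_negf mult.assoc power2_eq_square)
qed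

theorem corollary4p2:
  fixes h1 h2 :: real
    and r p pd q :: "real \<Rightarrow> real"
    and a1 a2 b1 b2 rho :: real
    and \<gamma> \<delta> :: "nat \<Rightarrow> real"
    and lam :: "nat \<Rightarrow> real"
    and \<phi> :: "nat \<Rightarrow> real \<Rightarrow> complex"
  assumes h: "-1 < h1" "h1 < h2" "h2 < 1"
    and reg: "pw_cont h1 h2 r" "pw_cont h1 h2 p" "pw_cont h1 h2 pd" "pw_cont h1 h2 q"
    and pd: "\<forall>x\<in>Omega h1 h2. (p has_real_derivative pd x) (at x within piece h1 h2 x)"
    and pos: "\<forall>x\<in>Omega h1 h2. r x > 0 \<and> p x > 0"
    and beta: "\<bar>b1\<bar> + \<bar>b2\<bar> \<noteq> 0"
    and gd: "\<forall>j\<in>{1..4}. \<gamma> j \<noteq> 0 \<and> \<delta> j \<noteq> 0"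
    and rho: "rho = a1 * b2 - a2 * b1" "rho > 0"
    and S: "\<delta> 1 * \<delta> 2 * lft p h1 = \<gamma> 1 * \<gamma> 2 * rgt p h1"
           "\<delta> 3 * \<delta> 4 * lft p h2 = \<gamma> 3 * \<gamma> 4 * rgt p h2"
    and eig_mono: "incseq lam"
    and dom: "\<forall>n. inDomK h1 h2 r p q a1 a2 \<gamma> \<delta> (\<phi> n, bc' h1 h2 a1 a2 (\<phi> n))"
    and eig1: "\<forall>n. ell_eq h1 h2 r p q (\<phi> n) (\<lambda>x. of_real (lam n) * \<phi> n x)"
    and eig2: "\<forall>n. - bc h1 h2 b1 b2 (\<phi> n) = of_real (lam n) * bc' h1 h2 a1 a2 (\<phi> n)"
    and normed: "\<forall>n. hnorm r p rho (\<phi> n, bc' h1 h2 a1 a2 (\<phi> n)) = 1"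
    and expansion: "\<forall>T. inH r T \<longrightarrow>
        (\<lambda>N. hnorm r p rho
           (\<lambda>x. fst T x - (\<Sum>n<N. hinner r p rho T (\<phi> n, bc' h1 h2 a1 a2 (\<phi> n)) * \<phi> n x),
            snd T - (\<Sum>n<N. hinner r p rho T (\<phi> n, bc' h1 h2 a1 a2 (\<phi> n)) * bc' h1 h2 a1 a2 (\<phi> n))))
        \<longlonglongrightarrow> 0"
    and real_valued: "\<forall>n. \<forall>x\<in>{-1..1}. \<phi> n x \<in> \<real>"
  shows "(\<lambda>n. (bc' h1 h2 a1 a2 (\<phi> n))\<^sup>2) sums complex_of_real (rho / p 1)
         \<and> (\<lambda>N. l2norm r (\<lambda>x. \<Sum>n<N. bc' h1 h2 a1 a2 (\<phi> n) * \<phi> n x)) \<longlonglongrightarrow> 0"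
proof -
  define c where "c n = bc' h1 h2 a1 a2 (\<phi> n)" for n
  define k where "k = p 1 / rho"
  have r_pos: "\<forall>x\<in>Omega h1 h2. r x > 0" using pos by blast
  have k_pos: "k > 0" using pos rho h by (simp add: k_def Omega_def)
  have c_real: "\<forall>n. cnj (c n) = c n"
  proof
    fix n
    have "\<forall>x\<in>{h2<..1}. \<phi> n x \<in> \<real>" using real_valued h by auto
    with dom show "cnj (c n) = c n" unfolding c_def by (blast intro: bc'_real[OF h(2,3)])
  qed
  have "inH r (\<lambda>x. 0, 1)" by (simp add: inH_def inL2_def set_borel_measurable_def)
  then have "(\<lambda>N. hnorm r p rho (\<lambda>x. - of_real k * (\<Sum>n<N. c n * \<phi> n x),
                                 1 - of_real k * (\<Sum>n<N. (c n)\<^sup>2))) \<longlonglongrightarrow> 0"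
    using expansion residual_of_unit[OF c_real] by (force simp: c_def k_def)
  note components = hnorm_tendsto_zero_components[OF r_pos k_pos[unfolded k_def] this]
  have "(\<lambda>N. k * l2norm r (\<lambda>x. \<Sum>n<N. c n * \<phi> n x)) \<longlonglongrightarrow> 0"
    using components(1) k_pos by (simp only: l2norm_scale norm_minus_cancel norm_of_real) simp
  then have "(\<lambda>N. l2norm r (\<lambda>x. \<Sum>n<N. c n * \<phi> n x)) \<longlonglongrightarrow> 0"
    using k_pos by (simp add: tendsto_mult_left_iff)
  moreover have "(\<lambda>N. \<Sum>n<N. (c n)\<^sup>2) \<longlonglongrightarrow> 1 / of_real k"
  proof -
    have "(\<lambda>N. (1 - (1 - of_real k * (\<Sum>n<N. (c n)\<^sup>2))) / of_real k) \<longlonglongrightarrow> (1 - 0) / of_real k"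
      using components(2) k_pos by (intro tendsto_intros) auto
    then show ?thesis using k_pos by simp
  qed
  ultimately show ?thesis by (simp add: c_def sums_def k_def)
qed

end
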